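(* For all non-negative integers $k$ and $n$, every weak embedding of $L_2(k)$ into $L_2(n)$ is a strong embedding.
   Context: $B_m$ denotes the Boolean lattice of all subsets of $\{1,\dots,m\}$ ordered by inclusion. $L_2(m)$ denotes the subposet of $B_m$ induced by the union of levels $\lfloor (m-1)/2\rfloor$ and $\lfloor (m+1)/2\rfloor$ (the $j$-th level being the $j$-element subsets). An injective map $f$ from a poset $P$ to a poset $Q$ is a weak embedding if $p\le q$ implies $f(p)\le f(q)$, and a strong embedding if $p\le q\iff f(p)\le f(q)$. *)

theory Defs
  imports Main
begin

definition boolean_lattice :: "nat \<Rightarrow> nat set set" where
  "boolean_lattice m = Pow {1..m}"

(* The j-th level of B_m (j an integer; negative levels are empty). *)
definition level :: "nat \<Rightarrow> int \<Rightarrow> nat set set" where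
  "level m j = {A \<in> boolean_lattice m. int (card A) = j}"

(* L_2(m): union of levels floor((m-1)/2) and floor((m+1)/2); int div floors. *)
definition L2 :: "nat \<Rightarrow> nat set set" where
  "L2 m = level m ((int m - 1) div 2) \<union> level m ((int m + 1) div 2)"

definition weak_embedding :: "'a set set \<Rightarrow> 'b set set \<Rightarrow> ('a set \<Rightarrow> 'b set) \<Rightarrow> bool" where
  "weak_embedding P Q f \<longleftrightarrow> f ` P \<subseteq> Q \<and> inj_on f P \<and>
     (\<forall>p\<in>P. \<forall>q\<in>P. p \<subseteq> q \<longrightarrow> f p \<subseteq> f q)"

definition strong_embedding :: "'a set set \<Rightarrow> 'b set set \<Rightarrow> ('a set \<Rightarrow> 'b set) \<Rightarrow> bool" where
  "strong_embedding P Q f \<longleftrightarrow> f ` P \<subseteq> Q \<and> inj_on f P \<and>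
     (\<forall>p\<in>P. \<forall>q\<in>P. p \<subseteq> q \<longleftrightarrow> f p \<subseteq> f q)"

end

theory Submission
  imports Defs
begin

text \<open>Let \<open>f\<close> map levels \<open>m, m + 1\<close> of \<open>2^S\<close> injectively and monotonically into levels
  \<open>M, M + 1\<close> of \<open>2^T\<close>, where \<open>m < |S|\<close>. Comparing neighbours shows that \<open>f\<close> preserves
  levels, and an upper set \<open>B\<close> containing distinct lower sets \<open>A1, A2\<close> has
  \<open>f B = f A1 \<union> f A2\<close>. Hence the contribution \<open>f B - f (B - {x})\<close> of \<open>x \<in> B\<close> is nonempty,
  and a hexagon argument shows it does not depend on \<open>B\<close>: it is a label of \<open>x\<close> alone. For a
  lower set \<open>A\<close>, \<open>f A\<close> contains the label of \<open>x\<close> exactly when \<open>x \<in> A\<close>. So if \<open>f A \<subseteq> f B\<close>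
  with \<open>A\<close> lower, \<open>B\<close> upper and \<open>x \<in> A - B\<close>, the label of \<open>x\<close> lies in \<open>f B\<close> although
  \<open>f B\<close> is the union of the images of two lower subsets of \<open>B\<close> avoiding \<open>x\<close>.\<close>

definition layer :: "'a set \<Rightarrow> nat \<Rightarrow> 'a set set" where
  "layer S j = {A. A \<subseteq> S \<and> card A = j}"

lemma finite_layer_member: "A \<in> layer S j \<Longrightarrow> finite S \<Longrightarrow> finite A"
  unfolding layer_def using finite_subset by blast

lemma insert_in_layer:
  assumes "A \<in> layer S j" "finite S" "c \<in> S" "c \<notin> A"
  shows "insert c A \<in> layer S (Suc j)"
  using assms finite_layer_member[OF assms(1,2)] unfolding layer_def by auto

lemma remove_in_layer:
  assumes "A \<in> layer S (Suc j)" "finite S" "x \<in> A"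
  shows "A - {x} \<in> layer S j"
  using assms finite_layer_member[OF assms(1,2)] unfolding layer_def by auto

lemma layer_subset_eq:
  assumes "A \<in> layer S j" "B \<in> layer S j" "finite S" "A \<subseteq> B"
  shows "A = B"
  using assms card_subset_eq[OF finite_layer_member[OF assms(2,3)]] unfolding layer_def by auto

lemma eq_Un_if_card_Suc:
  assumes "finite R" "P \<subseteq> R" "P' \<subseteq> R" "P \<noteq> P'"
    and "card P = M" "card P' = M" "card R = Suc M"
  shows "R = P \<union> P'"
proof -
  have "finite P" using assms(1,2) finite_subset by blast
  moreover have "\<not> P' \<subseteq> P"
    using card_subset_eq[OF \<open>finite P\<close>, of P'] assms(4-6) by auto
  ultimately have "card P < card (P \<union> P')"
    using assms(1-3) by (intro psubset_card_mono) (auto intro: finite_subset)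
  moreover have "card (P \<union> P') \<le> card R"
    using assms(1-3) by (intro card_mono) auto
  ultimately show ?thesis
    using assms(1-3,5,7) card_subset_eq[OF assms(1), of "P \<union> P'"] by simp
qed

lemma diff_singleton_if_card_Un_Suc:
  assumes "finite P" "finite Q" "card Q = M" "card (P \<union> Q) = Suc M"
  obtains a where "P - Q = {a}"
proof -
  have "card (P \<union> Q) = card Q + card (P - Q)"
    using assms(1,2) card_Un_disjoint[of Q "P - Q"] by (simp add: Un_commute)
  then have "card (P - Q) = 1" using assms(3,4) by simp
  then show ?thesis using that card_1_singletonE by metis
qed

lemma diff_eq_or_Un_eq:
  assumes "finite P" "finite P1" "finite P2" "card P = M" "card P1 = M" "card P2 = M"
    and "card (P \<union> P1) = Suc M" "card (P \<union> P2) = Suc M" "card (P1 \<union> P2) = Suc M"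
  shows "P \<union> P1 = P1 \<union> P2 \<or> P - P1 = P - P2"
proof (rule disjCI)
  assume ne: "P - P1 \<noteq> P - P2"
  obtain a where a: "P - P1 = {a}" using diff_singleton_if_card_Un_Suc assms(1,2,5,7) .
  obtain b where b: "P - P2 = {b}" using diff_singleton_if_card_Un_Suc assms(1,3,6,8) .
  have "a \<in> P2" using a b ne by auto
  then have "P \<union> P1 \<subseteq> P1 \<union> P2" using a by auto
  then show "P \<union> P1 = P1 \<union> P2"
    using assms(2,3,7,9) card_subset_eq[of "P1 \<union> P2" "P \<union> P1"] by simp
qed

locale consecutive_levels_map =
  fixes S :: "'a set" and T :: "'b set" and m M :: nat and f :: "'a set \<Rightarrow> 'b set"
  assumes finite_S: "finite S" and finite_T: "finite T"
    and below_top: "m < card S"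
    and maps_to: "A \<in> layer S m \<union> layer S (Suc m) \<Longrightarrow> f A \<in> layer T M \<union> layer T (Suc M)"
    and inj: "inj_on f (layer S m \<union> layer S (Suc m))"
    and mono: "\<lbrakk>A \<in> layer S m \<union> layer S (Suc m); B \<in> layer S m \<union> layer S (Suc m); A \<subseteq> B\<rbrakk>
      \<Longrightarrow> f A \<subseteq> f B"
begin

lemma finite_image: "A \<in> layer S m \<union> layer S (Suc m) \<Longrightarrow> finite (f A)"
  using maps_to finite_layer_member finite_T by blast

lemma card_image_cases:
  "A \<in> layer S m \<union> layer S (Suc m) \<Longrightarrow> card (f A) = M \<or> card (f A) = Suc M"
  using maps_to unfolding layer_def by blast

lemma card_image_strict_mono:
  assumes "A \<in> layer S m \<union> layer S (Suc m)" "B \<in> layer S m \<union> layer S (Suc m)" "A \<subset> B"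
  shows "card (f A) < card (f B)"
proof (rule psubset_card_mono)
  show "finite (f B)" using finite_image assms(2) .
  have "f A \<noteq> f B" using inj_onD[OF inj _ assms(1,2)] assms(3) by blast
  then show "f A \<subset> f B" using mono assms by blast
qed

lemma exists_outside_lower:
  assumes "A \<in> layer S m"
  obtains c where "c \<in> S" "c \<notin> A"
proof -
  have "card A < card S" using assms below_top unfolding layer_def by simp
  then have "\<not> S \<subseteq> A" using card_mono[OF finite_layer_member[OF assms finite_S], of S] by linarith
  then show ?thesis using that by blast
qed

lemma card_image_lower:
  assumes "A \<in> layer S m"
  shows "card (f A) = M"
proof -
  obtain c where "c \<in> S" "c \<notin> A" using exists_outside_lower assms .
  then have "insert c A \<in> layer S (Suc m)" using insert_in_layer assms finite_S by metis
  then have "card (f A) < card (f (insert c A))"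
    using assms \<open>c \<notin> A\<close> by (intro card_image_strict_mono) auto
  then show ?thesis using card_image_cases[of A] card_image_cases[of "insert c A"]
      assms \<open>insert c A \<in> layer S (Suc m)\<close> by auto
qed

lemma card_image_upper:
  assumes "B \<in> layer S (Suc m)"
  shows "card (f B) = Suc M"
proof -
  obtain x where "x \<in> B" using assms unfolding layer_def by fastforce
  then have "B - {x} \<in> layer S m" using remove_in_layer assms finite_S by metis
  then have "card (f (B - {x})) < card (f B)"
    using assms \<open>x \<in> B\<close> by (intro card_image_strict_mono) auto
  then show ?thesis using card_image_lower[OF \<open>B - {x} \<in> layer S m\<close>] card_image_cases[of B]
      assms by auto
qed

lemma image_upper_eq_Un:
  assumes "B \<in> layer S (Suc m)" "A1 \<in> layer S m" "A2 \<in> layer S m"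
    and "A1 \<subseteq> B" "A2 \<subseteq> B" "A1 \<noteq> A2"
  shows "f B = f A1 \<union> f A2"
proof (rule eq_Un_if_card_Suc)
  show "finite (f B)" using finite_image assms(1) by blast
  show "f A1 \<subseteq> f B" "f A2 \<subseteq> f B" using mono assms by blast+
  show "f A1 \<noteq> f A2" using inj_onD[OF inj] assms(2,3,6) by blast
  show "card (f A1) = M" "card (f A2) = M" using card_image_lower assms(2,3) by blast+
  show "card (f B) = Suc M" using card_image_upper assms(1) .
qed

definition contribution :: "'a set \<Rightarrow> 'a \<Rightarrow> 'b set" where
  "contribution B x = f B - f (B - {x})"

lemma contribution_nonempty:
  assumes "B \<in> layer S (Suc m)" "x \<in> B"
  shows "contribution B x \<noteq> {}"
proof -
  have "B - {x} \<in> layer S m" using remove_in_layer assms finite_S by metis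
  then have "card (f (B - {x})) < card (f B)"
    using assms by (intro card_image_strict_mono) auto
  moreover have "finite (f (B - {x}))" using finite_image \<open>B - {x} \<in> layer S m\<close> by blast
  ultimately have "\<not> f B \<subseteq> f (B - {x})" using card_mono[of "f (B - {x})" "f B"] by auto
  then show ?thesis unfolding contribution_def by blast
qed

text \<open>The upper sets \<open>A + a\<close>, \<open>A + b\<close>, \<open>C\<close> pairwise contain a common lower set among
  \<open>A\<close>, \<open>A1\<close>, \<open>A2\<close> (a hexagon); as \<open>f (A + a) \<noteq> f C\<close>, lemma \<open>diff_eq_or_Un_eq\<close> yields
  \<open>f A - f A1 = f A - f A2\<close>.\<close>

lemma contribution_exchange:
  assumes "A \<in> layer S m" "x \<in> A" "a \<in> S" "a \<notin> A" "b \<in> S" "b \<notin> A" "a \<noteq> b"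
  shows "contribution (insert a A) x = contribution (insert b A) x"
proof -
  have "m \<noteq> 0" using assms(1,2) finite_layer_member[OF assms(1) finite_S]
    unfolding layer_def by (auto simp: card_gt_0_iff)
  then obtain j where j: "m = Suc j" using not0_implies_Suc by blast
  define A1 A2 C where "A1 = insert a (A - {x})" and "A2 = insert b (A - {x})"
    and "C = insert a (insert b (A - {x}))"
  have base: "A - {x} \<in> layer S j" using remove_in_layer[OF _ finite_S assms(2)] assms(1) j by simp
  have lower: "A1 \<in> layer S m" "A2 \<in> layer S m"
    unfolding A1_def A2_def j using insert_in_layer[OF base finite_S] assms by auto
  have upper: "insert a A \<in> layer S (Suc m)" "insert b A \<in> layer S (Suc m)" "C \<in> layer S (Suc m)"
    unfolding C_def using insert_in_layer[OF assms(1) finite_S] insert_in_layer[OF lower(2) finite_S]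
      assms by (auto simp: A2_def)
  have fa: "f (insert a A) = f A \<union> f A1"
    using image_upper_eq_Un[OF upper(1) assms(1) lower(1)] assms(4) by (auto simp: A1_def)
  have fb: "f (insert b A) = f A \<union> f A2"
    using image_upper_eq_Un[OF upper(2) assms(1) lower(2)] assms(6) by (auto simp: A2_def)
  have fC: "f C = f A1 \<union> f A2"
    using image_upper_eq_Un[OF upper(3) lower] assms(4,7) by (auto simp: A1_def A2_def C_def)
  have "insert a A \<noteq> C" using assms(2,4,6) by (auto simp: C_def)
  then have "f A \<union> f A1 \<noteq> f A1 \<union> f A2"
    using inj_onD[OF inj, of "insert a A" C] upper(1,3) fa fC by auto
  moreover have "card (f A \<union> f A1) = Suc M" "card (f A \<union> f A2) = Suc M" "card (f A1 \<union> f A2) = Suc M"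
    using card_image_upper upper fa fb fC by metis+
  ultimately have "f A - f A1 = f A - f A2"
    using diff_eq_or_Un_eq[of "f A" "f A1" "f A2" M] finite_image card_image_lower assms(1) lower
    by blast
  moreover have "insert a A - {x} = A1" "insert b A - {x} = A2"
    using assms(2,4,6) by (auto simp: A1_def A2_def)
  ultimately show ?thesis unfolding contribution_def fa fb by auto
qed

lemma contribution_independent:
  assumes "B \<in> layer S (Suc m)" "B' \<in> layer S (Suc m)" "x \<in> B" "x \<in> B'"
  shows "contribution B x = contribution B' x"
  using assms(1,3)
proof (induction "card (B - B')" arbitrary: B)
  case 0
  then have "B \<subseteq> B'" using finite_layer_member[OF _ finite_S] by auto
  then show ?case using layer_subset_eq[OF 0(2) assms(2) finite_S] by simp
next
  case (Suc N)
  have fin: "finite B" "finite B'" using Suc.prems(1) assms(2) finite_layer_member finite_S by auto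
  obtain a where a: "a \<in> B" "a \<notin> B'" using Suc.hyps(2) by (metis card.empty Diff_eq_empty_iff
      nat.distinct(1) subsetI)
  have "\<not> B' \<subseteq> B" using layer_subset_eq[OF assms(2) Suc.prems(1) finite_S] a by blast
  then obtain b where b: "b \<in> B'" "b \<notin> B" by blast
  define A where "A = B - {a}"
  have A: "A \<in> layer S m" using remove_in_layer Suc.prems(1) a(1) finite_S unfolding A_def by metis
  have "a \<in> S" "b \<in> S" using Suc.prems(1) assms(2) a b unfolding layer_def by auto
  have "x \<in> A" using Suc.prems(2) a assms(4) unfolding A_def by auto
  have B: "B = insert a A" using a(1) unfolding A_def by auto
  have "contribution B x = contribution (insert b A) x"
    unfolding B by (rule contribution_exchange) (use A \<open>x \<in> A\<close> \<open>a \<in> S\<close> \<open>b \<in> S\<close> a b in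
      \<open>auto simp: A_def\<close>)
  also have "\<dots> = contribution B' x"
  proof (rule Suc.hyps(1))
    have "insert b A - B' = (B - B') - {a}" using a b unfolding A_def by auto
    then show "N = card (insert b A - B')" using Suc.hyps(2) a fin by simp
    show "insert b A \<in> layer S (Suc m)" using insert_in_layer[OF A finite_S \<open>b \<in> S\<close>] b
      unfolding A_def by auto
    show "x \<in> insert b A" using \<open>x \<in> A\<close> by simp
  qed
  finally show ?case .
qed

lemma contribution_subset_image_lower:
  assumes "A \<in> layer S m" "x \<in> A" "B \<in> layer S (Suc m)" "x \<in> B"
  shows "contribution B x \<subseteq> f A"
proof -
  obtain c where c: "c \<in> S" "c \<notin> A" using exists_outside_lower assms(1) .
  have R: "insert c A \<in> layer S (Suc m)" using insert_in_layer assms(1) finite_S c by metis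
  have "insert c A - {x} \<in> layer S m" using remove_in_layer[OF R finite_S] assms(2) by simp
  moreover have "A \<noteq> insert c A - {x}" using assms(2) by blast
  ultimately have "f (insert c A) = f A \<union> f (insert c A - {x})"
    using image_upper_eq_Un[OF R assms(1)] by blast
  then have "contribution (insert c A) x \<subseteq> f A" unfolding contribution_def by blast
  then show ?thesis using contribution_independent[OF assms(3) R assms(4)] assms(2) by simp
qed

lemma contribution_disjoint_image_lower:
  assumes "A \<in> layer S m" "x \<in> S" "x \<notin> A" "B \<in> layer S (Suc m)" "x \<in> B"
  shows "contribution B x \<inter> f A = {}"
proof -
  have R: "insert x A \<in> layer S (Suc m)" using insert_in_layer assms(1-3) finite_S by metis
  have "contribution (insert x A) x \<inter> f A = {}"
    unfolding contribution_def using assms(3) by auto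
  then show ?thesis using contribution_independent[OF assms(4) R assms(5)] by simp
qed

lemma lower_subset_upper_if_image_subset:
  assumes A: "A \<in> layer S m" and B: "B \<in> layer S (Suc m)" and "f A \<subseteq> f B"
  shows "A \<subseteq> B"
proof (rule subsetI, rule ccontr)
  fix x assume "x \<in> A" "x \<notin> B"
  have "x \<in> S" using A \<open>x \<in> A\<close> unfolding layer_def by auto
  obtain c where c: "c \<in> S" "c \<notin> A" using exists_outside_lower A .
  have R: "insert c A \<in> layer S (Suc m)" using insert_in_layer A finite_S c by metis
  obtain \<delta> where \<delta>: "\<delta> \<in> contribution (insert c A) x"
    using contribution_nonempty[OF R] \<open>x \<in> A\<close> by blast
  have "\<delta> \<in> f B"
    using contribution_subset_image_lower[OF A \<open>x \<in> A\<close> R] \<delta> \<open>x \<in> A\<close> assms(3) by auto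
  have "m \<noteq> 0" using A \<open>x \<in> A\<close> finite_layer_member[OF A finite_S]
    unfolding layer_def by (auto simp: card_gt_0_iff)
  obtain v1 where "v1 \<in> B" using B unfolding layer_def by fastforce
  have B1: "B - {v1} \<in> layer S m" using remove_in_layer[OF B finite_S \<open>v1 \<in> B\<close>] .
  then have "B - {v1} \<noteq> {}" using \<open>m \<noteq> 0\<close> unfolding layer_def by (intro notI) simp
  then obtain v2 where "v2 \<in> B" "v2 \<noteq> v1" by blast
  have B2: "B - {v2} \<in> layer S m" using remove_in_layer[OF B finite_S \<open>v2 \<in> B\<close>] .
  have "f B = f (B - {v1}) \<union> f (B - {v2})"
    by (rule image_upper_eq_Un[OF B B1 B2]) (use \<open>v1 \<in> B\<close> \<open>v2 \<noteq> v1\<close> in auto)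
  moreover have "\<delta> \<notin> f (B - {v})" if "B - {v} \<in> layer S m" for v
    using contribution_disjoint_image_lower[OF that \<open>x \<in> S\<close> _ R] \<delta> \<open>x \<in> A\<close> \<open>x \<notin> B\<close> by auto
  ultimately show False using \<open>\<delta> \<in> f B\<close> B1 B2 by auto
qed

lemma reflects_inclusion:
  assumes A: "A \<in> layer S m \<union> layer S (Suc m)" and B: "B \<in> layer S m \<union> layer S (Suc m)"
    and "f A \<subseteq> f B"
  shows "A \<subseteq> B"
proof (cases "card (f A) = card (f B)")
  case True
  then have "f A = f B" using card_subset_eq[OF finite_image[OF B] assms(3)] by simp
  then show ?thesis using inj_onD[OF inj _ A B] by simp
next
  case False
  then have "card (f A) < card (f B)"
    using card_mono[OF finite_image[OF B] assms(3)] by simp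
  then have "A \<in> layer S m" "B \<in> layer S (Suc m)"
    using A B card_image_lower card_image_upper by fastforce+
  then show ?thesis using lower_subset_upper_if_image_subset assms(3) by blast
qed

end

theorem strong_embedding_consecutive_levels:
  assumes "weak_embedding (layer S m \<union> layer S (Suc m)) (layer T M \<union> layer T (Suc M)) f"
    and "finite S" "finite T" "m < card S"
  shows "strong_embedding (layer S m \<union> layer S (Suc m)) (layer T M \<union> layer T (Suc M)) f"
proof -
  let ?P = "layer S m \<union> layer S (Suc m)" and ?Q = "layer T M \<union> layer T (Suc M)"
  have maps_to: "f ` ?P \<subseteq> ?Q" and inj: "inj_on f ?P"
    and mono: "\<forall>A\<in>?P. \<forall>B\<in>?P. A \<subseteq> B \<longrightarrow> f A \<subseteq> f B"
    using assms(1) unfolding weak_embedding_def by simp_all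
  interpret consecutive_levels_map S T m M f
    by unfold_locales (use assms(2-4) maps_to inj mono in auto)
  have "\<forall>A\<in>?P. \<forall>B\<in>?P. A \<subseteq> B \<longleftrightarrow> f A \<subseteq> f B"
    using mono reflects_inclusion by metis
  then show ?thesis using maps_to inj unfolding strong_embedding_def by (simp add: image_subset_iff)
qed

text \<open>For \<open>k = 0\<close> the integer index \<open>(int k - 1) div 2\<close> is \<open>-1\<close> while the natural one
  \<open>(k - 1) div 2\<close> is \<open>0\<close>; both sides are still \<open>{{}}\<close>.\<close>

lemma L2_eq_layers:
  "L2 k = layer {1..k} ((k - 1) div 2) \<union> layer {1..k} (Suc ((k - 1) div 2))"
proof (cases "k = 0")
  case True
  then show ?thesis unfolding L2_def level_def boolean_lattice_def layer_def by auto
next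
  case False
  then obtain j where "k = Suc j" using not0_implies_Suc by blast
  moreover have "int j div 2 = int (j div 2)" "(int j + 2) div 2 = int (j div 2) + 1"
    by (simp_all add: zdiv_int)
  ultimately have "int c = (int k - 1) div 2 \<or> int c = (int k + 1) div 2 \<longleftrightarrow>
      c = (k - 1) div 2 \<or> c = Suc ((k - 1) div 2)" for c
    by simp arith
  then show ?thesis unfolding L2_def level_def boolean_lattice_def layer_def by blast
qed

theorem mainTheorem9:
  fixes k n :: nat and f :: "nat set \<Rightarrow> nat set"
  assumes "weak_embedding (L2 k) (L2 n) f"
  shows "strong_embedding (L2 k) (L2 n) f"
proof (cases "k = 0")
  case True
  then have "L2 k = {{}}" unfolding L2_eq_layers layer_def by auto
  then show ?thesis using assms unfolding weak_embedding_def strong_embedding_def by auto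
next
  case False
  then show ?thesis
    using strong_embedding_consecutive_levels[of "{1..k}" _ "{1..n}"] assms
    unfolding L2_eq_layers by simp
qed

end
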